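(* Let $V$ and $H$ be real Hilbert spaces with scalar products $(\cdot,\cdot)_V$, $(\cdot,\cdot)_H$ and norms $\|\cdot\|_V$, $\|\cdot\|_H$, and let $\gamma:V\to H$ be a continuous, linear and compact operator. Let $\lambda_i$, $i=1,2,\dots$, be the eigenvalues of the problem: find $\lambda\in\mathbb{R}$, $u\in V$, $u\ne0$, with $(u,v)_V=\lambda(\gamma u,\gamma v)_H$ for all $v\in V$. Let $u_*\in V$ and $\lambda_*\in\mathbb{R}$ be arbitrary and let $w\in V$ satisfy $$(w,v)_V=(u_*,v)_V-\lambda_*(\gamma u_*,\gamma v)_H\quad\forall v\in V.$$ If $\gamma u_*\neq0$, then $$\min_i\left|\frac{\lambda_i-\lambda_*}{\lambda_i}\right|\le\frac{\|\gamma w\|_H}{\|\gamma u_*\|_H}.$$ *)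

theory Defs
  imports "HOL-Analysis.Analysis"
begin

definition compact_operator :: "('a::real_normed_vector \<Rightarrow> 'b::real_normed_vector) \<Rightarrow> bool" where
  "compact_operator T \<longleftrightarrow> bounded_linear T \<and>
     (\<forall>B. bounded B \<longrightarrow> compact (closure (T ` B)))"

definition steklov_eigenvalue ::
  "('v::real_inner \<Rightarrow> 'h::real_inner) \<Rightarrow> real \<Rightarrow> bool" where
  "steklov_eigenvalue \<gamma> lam \<longleftrightarrow>
     (\<exists>u. u \<noteq> 0 \<and> (\<forall>v. inner u v = lam * inner (\<gamma> u) (\<gamma> v)))"

end

theory Submission
  imports Defs
begin

text \<open>Let K be the compact self-adjoint operator on V with (K u, v) = (\<gamma> u, \<gamma> v); the eigenvalues
  \<lambda>_i are the reciprocals of its positive eigenvalues \<mu>_i. Maximising the Rayleigh quotient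
  |\<gamma> v|^2 / |v|^2 successively on the orthogonal complement of the maximisers already found gives an
  orthonormal sequence e_j with (\<gamma> e_j, \<gamma> v) = \<mu>_j (e_j, v) for all v, and compactness forces
  \<mu>_j \<longrightarrow> 0. Testing the equation for w with v = e_j gives (e_j, w) = (1 - \<lambda>_* \<mu>_j) (e_j, u_*), hence
    |\<gamma> w|^2 \<ge> \<Sum> \<mu>_j (e_j, u_*)^2 (1 - \<lambda>_* \<mu>_j)^2   and   |\<gamma> u_*|^2 = \<Sum> \<mu>_j (e_j, u_*)^2,
  the tail after k terms being at most \<mu>_k |u_*|^2. So a weighted mean of the numbers
  (1 - \<lambda>_* \<mu>_j)^2 = ((\<lambda>_j - \<lambda>_*) / \<lambda>_j)^2 is at most |\<gamma> w|^2 / |\<gamma> u_*|^2, and one of them with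
  positive weight is too.\<close>

lemma power2_norm_add_scaleR:
  fixes x y :: "'a::real_inner"
  shows "(norm (x + t *\<^sub>R y))\<^sup>2 = (norm x)\<^sup>2 + 2 * t * inner x y + t\<^sup>2 * (norm y)\<^sup>2"
  unfolding power2_norm_eq_inner
  by (simp add: inner_add_left inner_add_right inner_commute power2_eq_square algebra_simps)

lemma closed_orthogonal_comp: "closed (W\<^sup>\<bottom>)"
proof -
  have "W\<^sup>\<bottom> = (\<Inter>y\<in>W. {x. inner y x = 0})"
    by (auto simp: orthogonal_comp_def orthogonal_def)
  then show ?thesis
    by (simp add: closed_INT closed_hyperplane)
qed

lemma linear_coeff_zero_if_quadratic_nonneg:
  fixes b c :: real
  assumes "\<And>t. 0 \<le> b * t + c * t\<^sup>2"
  shows "b = 0"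
proof (rule ccontr)
  assume "b \<noteq> 0"
  define s where "s = 1 / (\<bar>c\<bar> + 1)"
  have "s > 0" "c * s < 1"
    by (auto simp: s_def field_simps abs_if)
  then have "b\<^sup>2 * s * (c * s - 1) < 0"
    using \<open>b \<noteq> 0\<close> by (simp add: mult_pos_neg)
  moreover have "b * (- b * s) + c * (- b * s)\<^sup>2 = b\<^sup>2 * s * (c * s - 1)"
    by (simp add: power2_eq_square algebra_simps)
  ultimately show False
    using assms[of "- b * s"] by linarith
qed

subsection \<open>Maximising the Rayleigh quotient of a compact operator\<close>

lemma Rayleigh_maximizer_eigen:
  fixes g :: "'v::real_inner \<Rightarrow> 'h::real_inner"
  assumes "linear g" "subspace S" "u \<in> S" "v \<in> S"
    and bound: "\<And>x. x \<in> S \<Longrightarrow> (norm (g x))\<^sup>2 \<le> M * (norm x)\<^sup>2"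
    and attained: "(norm (g u))\<^sup>2 = M * (norm u)\<^sup>2"
  shows "inner (g u) (g v) = M * inner u v"
proof -
  interpret g: linear g by fact
  \<comment> \<open>t \<mapsto> M |u + t v|^2 - |g (u + t v)|^2 is nonnegative and vanishes at 0, so its linear coefficient vanishes.\<close>
  have "0 \<le> 2 * (M * inner u v - inner (g u) (g v)) * t + (M * (norm v)\<^sup>2 - (norm (g v))\<^sup>2) * t\<^sup>2"
    for t
  proof -
    have "u + t *\<^sub>R v \<in> S"
      using \<open>subspace S\<close> \<open>u \<in> S\<close> \<open>v \<in> S\<close> by (simp add: subspace_add subspace_scale)
    then have "(norm (g u + t *\<^sub>R g v))\<^sup>2 \<le> M * (norm (u + t *\<^sub>R v))\<^sup>2"
      using bound[of "u + t *\<^sub>R v"] by (simp add: g.add g.scale)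
    then show ?thesis
      using attained by (simp add: power2_norm_add_scaleR algebra_simps)
  qed
  then have "2 * (M * inner u v - inner (g u) (g v)) = 0"
    by (rule linear_coeff_zero_if_quadratic_nonneg)
  then show ?thesis
    by simp
qed

lemma Rayleigh_bound_homogeneous:
  fixes g :: "'v::real_normed_vector \<Rightarrow> 'h::real_normed_vector"
  assumes "linear g" "subspace S" "v \<in> S"
    and unit: "\<And>u. u \<in> S \<Longrightarrow> norm u = 1 \<Longrightarrow> (norm (g u))\<^sup>2 \<le> M"
  shows "(norm (g v))\<^sup>2 \<le> M * (norm v)\<^sup>2"
proof (cases "v = 0")
  case True
  then show ?thesis
    using linear_0[OF \<open>linear g\<close>] by simp
next
  case False
  have "(norm (g (v /\<^sub>R norm v)))\<^sup>2 \<le> M"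
    using False \<open>subspace S\<close> \<open>v \<in> S\<close> by (intro unit) (simp_all add: subspace_scale)
  moreover have "norm (g (v /\<^sub>R norm v)) = norm (g v) / norm v"
    by (simp add: linear_scale[OF \<open>linear g\<close>] field_simps)
  ultimately show ?thesis
    using False by (simp add: power_divide pos_divide_le_eq)
qed

lemma Rayleigh_maximizing_seq_exists:
  fixes g :: "'v::real_normed_vector \<Rightarrow> 'h::real_normed_vector"
  assumes "bounded_linear g" "subspace S" "\<exists>v\<in>S. g v \<noteq> 0"
  obtains M x where "0 < M" "\<And>v. v \<in> S \<Longrightarrow> (norm (g v))\<^sup>2 \<le> M * (norm v)\<^sup>2"
    "\<And>n. x n \<in> S" "\<And>n. norm (x n) = 1" "(\<lambda>n. (norm (g (x n)))\<^sup>2) \<longlonglongrightarrow> M"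
proof -
  interpret g: bounded_linear g by fact
  define R where "R = (\<lambda>u. (norm (g u))\<^sup>2) ` (S \<inter> sphere 0 1)"
  obtain K where K: "\<And>x. norm (g x) \<le> norm x * K"
    using g.bounded by blast
  have "bdd_above R"
    by (rule bdd_aboveI[of _ "K\<^sup>2"]) (auto simp: R_def intro!: power_mono order_trans[OF K])
  have le_Sup: "(norm (g u))\<^sup>2 \<le> Sup R" if "u \<in> S" "norm u = 1" for u
    using that \<open>bdd_above R\<close> by (intro cSup_upper) (auto simp: R_def)
  obtain v where "v \<in> S" "g v \<noteq> 0"
    using assms(3) by blast
  then have "v \<noteq> 0"
    using g.zero by auto
  define u0 where "u0 = v /\<^sub>R norm v"
  have u0: "u0 \<in> S" "norm u0 = 1" "0 < (norm (g u0))\<^sup>2"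
    using \<open>v \<noteq> 0\<close> \<open>v \<in> S\<close> \<open>g v \<noteq> 0\<close> \<open>subspace S\<close> by (auto simp: u0_def subspace_scale g.scaleR)
  then have "R \<noteq> {}"
    by (auto simp: R_def)
  have "0 < Sup R"
    using le_Sup[OF u0(1,2)] u0(3) by linarith
  have "\<exists>u. u \<in> S \<and> norm u = 1 \<and> Sup R - 1 / Suc n < (norm (g u))\<^sup>2" for n
    using less_cSup_iff[OF \<open>R \<noteq> {}\<close> \<open>bdd_above R\<close>, of "Sup R - 1 / Suc n"] by (auto simp: R_def)
  then obtain x where x: "\<And>n. x n \<in> S" "\<And>n. norm (x n) = 1"
    "\<And>n. Sup R - 1 / Suc n < (norm (g (x n)))\<^sup>2"
    by metis
  have "(\<lambda>n. (norm (g (x n)))\<^sup>2) \<longlonglongrightarrow> Sup R"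
  proof (rule tendsto_sandwich)
    show "(\<lambda>n. Sup R - 1 / Suc n) \<longlonglongrightarrow> Sup R"
      using tendsto_diff[OF tendsto_const LIMSEQ_inverse_real_of_nat, of "Sup R"]
      by (simp add: inverse_eq_divide)
    show "\<forall>\<^sub>F n in sequentially. Sup R - 1 / Suc n \<le> (norm (g (x n)))\<^sup>2"
      using x(3) by (simp add: less_imp_le)
    show "\<forall>\<^sub>F n in sequentially. (norm (g (x n)))\<^sup>2 \<le> Sup R"
      using x(1,2) le_Sup by simp
  qed simp
  moreover have "(norm (g v))\<^sup>2 \<le> Sup R * (norm v)\<^sup>2" if "v \<in> S" for v
    using Rayleigh_bound_homogeneous[OF g.linear_axioms \<open>subspace S\<close> that le_Sup] .
  ultimately show ?thesis
    using that \<open>0 < Sup R\<close> x by blast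
qed

lemma Rayleigh_defect_parallelogram:
  fixes g :: "'v::real_inner \<Rightarrow> 'h::real_inner"
  assumes "linear g" "subspace S"
    and bound: "\<And>v. v \<in> S \<Longrightarrow> (norm (g v))\<^sup>2 \<le> M * (norm v)\<^sup>2"
    and "a \<in> S" "b \<in> S"
  shows "M * (norm (a - b))\<^sup>2 \<le> 2 * (M * (norm a)\<^sup>2 - (norm (g a))\<^sup>2) + 2 * (M * (norm b)\<^sup>2 - (norm (g b))\<^sup>2)
    + (norm (g a - g b))\<^sup>2"
proof -
  interpret g: linear g by fact
  define Q where "Q v = M * (norm v)\<^sup>2 - (norm (g v))\<^sup>2" for v
  \<comment> \<open>Q is a nonnegative quadratic form on S, so the parallelogram law bounds Q (a - b) by 2 Q a + 2 Q b.\<close>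
  have "0 \<le> Q (a + b)"
    using bound[of "a + b"] assms(2,4,5) by (simp add: Q_def subspace_add)
  moreover have "Q (a - b) + Q (a + b) = 2 * Q a + 2 * Q b"
    using power2_norm_add_scaleR[of a 1 b] power2_norm_add_scaleR[of a "-1" b]
      power2_norm_add_scaleR[of "g a" 1 "g b"] power2_norm_add_scaleR[of "g a" "-1" "g b"]
    by (simp add: Q_def g.diff g.add algebra_simps) (metis distrib_left)
  ultimately show ?thesis
    by (simp add: Q_def g.diff)
qed

lemma Rayleigh_maximizing_seq_Cauchy:
  fixes g :: "'v::real_inner \<Rightarrow> 'h::real_inner" and x :: "nat \<Rightarrow> 'v"
  assumes "linear g" "subspace S" "0 < M"
    and bound: "\<And>v. v \<in> S \<Longrightarrow> (norm (g v))\<^sup>2 \<le> M * (norm v)\<^sup>2"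
    and x: "\<And>n. x n \<in> S" "\<And>n. norm (x n) = 1"
    and maximizing: "(\<lambda>n. (norm (g (x n)))\<^sup>2) \<longlonglongrightarrow> M"
    and "Cauchy (\<lambda>n. g (x n))"
  shows "Cauchy x"
proof (rule CauchyI)
  fix \<epsilon> :: real
  assume "0 < \<epsilon>"
  define Q where "Q v = M * (norm v)\<^sup>2 - (norm (g v))\<^sup>2" for v
  have key: "M * (norm (x m - x n))\<^sup>2 \<le> 2 * Q (x m) + 2 * Q (x n) + (norm (g (x m) - g (x n)))\<^sup>2"
    for m n
    unfolding Q_def by (rule Rayleigh_defect_parallelogram[OF \<open>linear g\<close> \<open>subspace S\<close> bound x(1) x(1)])
  have "(\<lambda>n. Q (x n)) \<longlonglongrightarrow> M - M"
    unfolding Q_def x(2) power_one mult_1_right by (intro tendsto_intros maximizing)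
  then have "\<forall>\<^sub>F n in sequentially. Q (x n) < M * \<epsilon>\<^sup>2 / 8"
    using \<open>0 < M\<close> \<open>0 < \<epsilon>\<close> by (intro order_tendstoD(2)) auto
  then obtain N1 where N1: "\<And>n. n \<ge> N1 \<Longrightarrow> Q (x n) < M * \<epsilon>\<^sup>2 / 8"
    by (auto simp: eventually_sequentially)
  obtain N2 where N2: "\<And>m n. m \<ge> N2 \<Longrightarrow> n \<ge> N2 \<Longrightarrow> norm (g (x m) - g (x n)) < sqrt (M * \<epsilon>\<^sup>2 / 2)"
    using CauchyD[OF \<open>Cauchy (\<lambda>n. g (x n))\<close>, of "sqrt (M * \<epsilon>\<^sup>2 / 2)"] \<open>0 < M\<close> \<open>0 < \<epsilon>\<close>
    by auto
  show "\<exists>N. \<forall>m\<ge>N. \<forall>n\<ge>N. norm (x m - x n) < \<epsilon>"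
  proof (intro exI allI impI)
    fix m n
    assume "max N1 N2 \<le> m" "max N1 N2 \<le> n"
    then have "norm (g (x m) - g (x n)) < sqrt (M * \<epsilon>\<^sup>2 / 2)"
      by (intro N2) auto
    then have "(norm (g (x m) - g (x n)))\<^sup>2 < (sqrt (M * \<epsilon>\<^sup>2 / 2))\<^sup>2"
      by (intro power_strict_mono) auto
    then have "(norm (g (x m) - g (x n)))\<^sup>2 < M * \<epsilon>\<^sup>2 / 2"
      using \<open>0 < M\<close> by simp
    then have "M * (norm (x m - x n))\<^sup>2 < M * \<epsilon>\<^sup>2"
      using key[of m n] N1[of m] N1[of n] \<open>max N1 N2 \<le> m\<close> \<open>max N1 N2 \<le> n\<close> by simp
    then show "norm (x m - x n) < \<epsilon>"
      using \<open>0 < M\<close> \<open>0 < \<epsilon>\<close> by (simp add: power_less_imp_less_base less_imp_le)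
  qed
qed

lemma compact_operator_convergent_subseq:
  fixes g :: "'a::real_normed_vector \<Rightarrow> 'b::real_normed_vector" and x :: "nat \<Rightarrow> 'a"
  assumes "compact_operator g" "\<And>n. norm (x n) \<le> 1"
  obtains r where "strict_mono r" "convergent (\<lambda>n. g (x (r n)))"
proof -
  have sc: "seq_compact (closure (g ` cball 0 1))"
    using assms(1) by (simp add: compact_operator_def compact_imp_seq_compact)
  have mem: "\<forall>n. g (x n) \<in> closure (g ` cball 0 1)"
  proof
    fix n
    have "x n \<in> cball 0 1"
      using assms(2) by simp
    then show "g (x n) \<in> closure (g ` cball 0 1)"
      by (rule closure_subset[THEN subsetD, OF imageI])
  qed
  obtain y r where "y \<in> closure (g ` cball 0 1)" "strict_mono r"
    "((\<lambda>n. g (x n)) \<circ> r) \<longlonglongrightarrow> y"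
    using seq_compactE[OF sc mem] .
  then show ?thesis
    using that by (auto simp: convergent_def comp_def)
qed

lemma compact_operator_Rayleigh_maximizer:
  fixes g :: "'v::{real_inner,complete_space} \<Rightarrow> 'h::real_inner"
  assumes "compact_operator g" "closed S" "subspace S" "\<exists>v\<in>S. g v \<noteq> 0"
  shows "\<exists>u\<in>S. norm u = 1 \<and> (\<forall>v\<in>S. (norm (g v))\<^sup>2 \<le> (norm (g u))\<^sup>2 * (norm v)\<^sup>2)"
proof -
  interpret g: bounded_linear g
    using assms(1) by (simp add: compact_operator_def)
  obtain M u where "0 < M" and bound: "\<And>v. v \<in> S \<Longrightarrow> (norm (g v))\<^sup>2 \<le> M * (norm v)\<^sup>2"
    and u: "\<And>n. u n \<in> S" "\<And>n. norm (u n) = 1" "(\<lambda>n. (norm (g (u n)))\<^sup>2) \<longlonglongrightarrow> M"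
    using Rayleigh_maximizing_seq_exists[OF g.bounded_linear_axioms \<open>subspace S\<close> assms(4)] by blast
  obtain r where r: "strict_mono r" "convergent (\<lambda>n. g (u (r n)))"
    using compact_operator_convergent_subseq[OF assms(1), of u] u(2) by auto
  define x where "x n = u (r n)" for n
  have x_unit: "x n \<in> S" "norm (x n) = 1" for n
    using u by (simp_all add: x_def)
  have maximizing: "(\<lambda>n. (norm (g (x n)))\<^sup>2) \<longlonglongrightarrow> M"
    using LIMSEQ_subseq_LIMSEQ[OF u(3) r(1)] by (simp add: x_def comp_def)
  have "Cauchy (\<lambda>n. g (x n))"
    using r(2) by (simp add: x_def convergent_Cauchy)
  then have "Cauchy x"
    using Rayleigh_maximizing_seq_Cauchy[where x = x, OF g.linear_axioms \<open>subspace S\<close> \<open>0 < M\<close> bound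
        x_unit maximizing] by blast
  then obtain w where w: "x \<longlonglongrightarrow> w"
    by (auto simp: Cauchy_convergent_iff convergent_def)
  have "(\<lambda>n. (norm (g (x n)))\<^sup>2) \<longlonglongrightarrow> (norm (g w))\<^sup>2"
    using w by (intro tendsto_intros g.tendsto)
  then have "(norm (g w))\<^sup>2 = M"
    using maximizing LIMSEQ_unique by blast
  moreover have "w \<in> S"
    using closed_sequentially[OF \<open>closed S\<close> _ w] x_unit by blast
  moreover have "norm w = 1"
    using LIMSEQ_unique[OF tendsto_norm[OF w]] x_unit(2) by simp
  ultimately show ?thesis
    using bound by auto
qed

lemma orthogonal_seq_in_compact_frequently_small:
  fixes f :: "nat \<Rightarrow> 'a::real_inner"
  assumes "compact K" "\<And>n. f n \<in> K" "\<And>i j. i \<noteq> j \<Longrightarrow> orthogonal (f i) (f j)" "0 < \<epsilon>"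
  shows "\<exists>k\<ge>N. norm (f k) < \<epsilon>"
proof -
  obtain y r where "strict_mono r" "((\<lambda>n. f (N + n)) \<circ> r) \<longlonglongrightarrow> y"
    using seq_compactE[OF compact_imp_seq_compact[OF \<open>compact K\<close>]] assms(2) by metis
  then have "Cauchy ((\<lambda>n. f (N + n)) \<circ> r)"
    by (simp add: LIMSEQ_imp_Cauchy)
  then obtain M where M: "\<forall>m\<ge>M. \<forall>n\<ge>M. norm (f (N + r m) - f (N + r n)) < \<epsilon>"
    using CauchyD \<open>0 < \<epsilon>\<close> unfolding comp_def by blast
  define i j where "i = N + r M" and "j = N + r (Suc M)"
  have "i \<noteq> j"
    using strict_monoD[OF \<open>strict_mono r\<close>, of M "Suc M"] by (simp add: i_def j_def)
  \<comment> \<open>Two orthogonal vectors are each no longer than their difference.\<close>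
  have "(norm (f i - f j))\<^sup>2 = (norm (f i))\<^sup>2 + (norm (f j))\<^sup>2"
    using norm_add_Pythagorean[of "f i" "- f j"] assms(3)[OF \<open>i \<noteq> j\<close>]
    by (simp add: orthogonal_def)
  then have "norm (f i) \<le> norm (f i - f j)"
    by (metis le_add_same_cancel1 norm_ge_zero power2_le_imp_le zero_le_power2)
  also have "\<dots> < \<epsilon>"
    using M by (simp add: i_def j_def)
  finally have "norm (f i) < \<epsilon>" .
  moreover have "i \<ge> N"
    by (simp add: i_def)
  ultimately show ?thesis
    by blast
qed

lemma exists_positive_weight:
  fixes p \<delta> :: "nat \<Rightarrow> real"
  assumes "\<And>j. 0 \<le> p j" and "0 < T" and "\<delta> \<longlonglongrightarrow> 0"
    and total: "\<And>k. T \<le> (\<Sum>j<k. p j) + \<delta> k"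
  shows "\<exists>j. 0 < p j"
proof (rule ccontr)
  assume "\<nexists>j. 0 < p j"
  then have "p j = 0" for j
    using assms(1)[of j] by (metis antisym not_le)
  then have "T \<le> \<delta> k" for k
    using total[of k] by simp
  moreover obtain N where "\<forall>k\<ge>N. \<delta> k < T"
    using order_tendstoD(2)[OF \<open>\<delta> \<longlonglongrightarrow> 0\<close> \<open>0 < T\<close>] by (auto simp: eventually_sequentially)
  ultimately show False
    by (meson le_refl not_le)
qed

lemma exists_weighted_term_le:
  fixes p q \<delta> :: "nat \<Rightarrow> real"
  assumes p: "\<And>j. 0 \<le> p j" and "0 < T" and "0 \<le> \<rho>" and "\<delta> \<longlonglongrightarrow> 0"
    and total: "\<And>k. T \<le> (\<Sum>j<k. p j) + \<delta> k"
    and mean: "\<And>k. (\<Sum>j<k. p j * q j) \<le> \<rho> * T"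
  shows "\<exists>j. 0 < p j \<and> q j \<le> \<rho>"
proof (rule ccontr)
  assume "\<nexists>j. 0 < p j \<and> q j \<le> \<rho>"
  then have q: "\<And>j. 0 < p j \<Longrightarrow> \<rho> < q j"
    by force
  have "\<exists>j. 0 < p j"
    using exists_positive_weight[OF p \<open>0 < T\<close> \<open>\<delta> \<longlonglongrightarrow> 0\<close> total] .
  then obtain j0 where "0 < p j0" ..
  define G where "G = p j0 * (q j0 - \<rho>)"
  have "0 < G"
    using q[OF \<open>0 < p j0\<close>] \<open>0 < p j0\<close> by (simp add: G_def)
  have "\<forall>\<^sub>F k in sequentially. \<rho> * \<delta> k < G \<and> j0 < k"
    using order_tendstoD(2)[OF tendsto_mult_right_zero[OF \<open>\<delta> \<longlonglongrightarrow> 0\<close>] \<open>0 < G\<close>]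
      eventually_gt_at_top
    by (rule eventually_conj)
  then obtain k where k: "\<rho> * \<delta> k < G" "j0 < k"
    by (auto simp: eventually_sequentially)
  have terms: "0 \<le> p j * (q j - \<rho>)" for j
    using p[of j] q[of j] by (cases "p j = 0") auto
  have "G \<le> (\<Sum>j<k. p j * (q j - \<rho>))"
    unfolding G_def by (rule member_le_sum) (use k(2) terms in auto)
  also have "\<dots> = (\<Sum>j<k. p j * q j) - \<rho> * (\<Sum>j<k. p j)"
    by (simp add: sum_subtractf sum_distrib_left algebra_simps)
  also have "\<dots> \<le> \<rho> * \<delta> k"
  proof -
    have "\<rho> * T \<le> \<rho> * (\<Sum>j<k. p j) + \<rho> * \<delta> k"
      using mult_left_mono[OF total[of k] \<open>0 \<le> \<rho>\<close>] by (simp add: distrib_left)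
    then show ?thesis
      using mean[of k] by linarith
  qed
  finally show False
    using k(1) by simp
qed

subsection \<open>Successive Rayleigh maximisers\<close>

text \<open>Once \<gamma> vanishes on the orthogonal complement of e 0, \<dots>, e (k - 1), the remaining
  vectors are taken to be 0; this is why e k is only required to be a unit vector or zero.\<close>

locale Rayleigh_sequence =
  fixes \<gamma> :: "'v::real_inner \<Rightarrow> 'h::real_inner" and e :: "nat \<Rightarrow> 'v"
  assumes compact_operator: "compact_operator \<gamma>"
    and orthogonal_earlier: "j < k \<Longrightarrow> orthogonal (e j) (e k)"
    and unit_or_zero: "norm (e k) = 1 \<or> e k = 0"
    and maximal: "v \<in> (e ` {..<k})\<^sup>\<bottom> \<Longrightarrow> (norm (\<gamma> v))\<^sup>2 \<le> (norm (\<gamma> (e k)))\<^sup>2 * (norm v)\<^sup>2"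
begin

definition \<mu> :: "nat \<Rightarrow> real"
  where "\<mu> k = (norm (\<gamma> (e k)))\<^sup>2"

lemma linear: "linear \<gamma>"
  using compact_operator by (simp add: compact_operator_def bounded_linear.linear)

lemma e_in_complement: "e k \<in> (e ` {..<k})\<^sup>\<bottom>"
  using orthogonal_earlier by (auto simp: orthogonal_comp_def)

lemma inner_e_e: "inner (e i) (e j) = (if i = j \<and> e i \<noteq> 0 then 1 else 0)"
proof -
  consider "i < j" | "j < i" | "i = j"
    by linarith
  then show ?thesis
  proof cases
    case 1
    then show ?thesis
      using orthogonal_earlier[OF 1] by (auto simp: orthogonal_def)
  next
    case 2
    then show ?thesis
      using orthogonal_earlier[OF 2] by (auto simp: orthogonal_def inner_commute)
  next
    case 3
    then show ?thesis
      using unit_or_zero[of i] by (auto simp: power2_norm_eq_inner[symmetric])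
  qed
qed

lemma eigen_on_complement:
  assumes "v \<in> (e ` {..<k})\<^sup>\<bottom>"
  shows "inner (\<gamma> (e k)) (\<gamma> v) = \<mu> k * inner (e k) v"
proof (rule Rayleigh_maximizer_eigen[OF linear subspace_orthogonal_comp e_in_complement assms])
  show "(norm (\<gamma> x))\<^sup>2 \<le> \<mu> k * (norm x)\<^sup>2" if "x \<in> (e ` {..<k})\<^sup>\<bottom>" for x
    using maximal[OF that] by (simp add: \<mu>_def)
  show "(norm (\<gamma> (e k)))\<^sup>2 = \<mu> k * (norm (e k))\<^sup>2"
    using unit_or_zero[of k] linear_0[OF linear] by (auto simp: \<mu>_def)
qed

lemma gamma_e_orthogonal:
  assumes "i \<noteq> j"
  shows "orthogonal (\<gamma> (e i)) (\<gamma> (e j))"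
proof -
  have "inner (\<gamma> (e i)) (\<gamma> (e j)) = 0" if "i < j" for i j
  proof -
    have "e j \<in> (e ` {..<i})\<^sup>\<bottom>"
      using orthogonal_earlier \<open>i < j\<close> by (auto simp: orthogonal_comp_def)
    then show ?thesis
      using eigen_on_complement inner_e_e \<open>i < j\<close> by simp
  qed
  then show ?thesis
    using assms by (metis linorder_neqE_nat orthogonal_def inner_commute)
qed

lemma \<mu>_nonneg: "0 \<le> \<mu> k"
  by (simp add: \<mu>_def)

lemma \<mu>_Suc_le: "\<mu> (Suc k) \<le> \<mu> k"
proof -
  have "e (Suc k) \<in> (e ` {..<k})\<^sup>\<bottom>"
    using orthogonal_earlier by (auto simp: orthogonal_comp_def)
  then have "\<mu> (Suc k) \<le> \<mu> k * (norm (e (Suc k)))\<^sup>2"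
    using maximal by (simp add: \<mu>_def)
  also have "\<dots> \<le> \<mu> k"
    using unit_or_zero[of "Suc k"] \<mu>_nonneg[of k] by auto
  finally show ?thesis .
qed

lemma \<mu>_frequently_small:
  assumes "0 < \<epsilon>"
  shows "\<exists>k\<ge>N. \<mu> k < \<epsilon>"
proof -
  have "compact (closure (\<gamma> ` cball 0 1))"
    using compact_operator by (simp add: compact_operator_def)
  moreover have "\<gamma> (e k) \<in> closure (\<gamma> ` cball 0 1)" for k
    using unit_or_zero[of k] closure_subset by (metis image_eqI mem_cball_0 norm_zero order_refl
        zero_le_one subsetD)
  ultimately obtain k where "k \<ge> N" "norm (\<gamma> (e k)) < sqrt \<epsilon>"
    using orthogonal_seq_in_compact_frequently_small[of _ "\<lambda>k. \<gamma> (e k)"] gamma_e_orthogonal assms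
    by (metis real_sqrt_gt_zero)
  moreover have "(norm (\<gamma> (e k)))\<^sup>2 < (sqrt \<epsilon>)\<^sup>2"
    using calculation(2) by (intro power_strict_mono) auto
  ultimately show ?thesis
    using assms by (auto simp: \<mu>_def)
qed

lemma \<mu>_tendsto_zero: "\<mu> \<longlonglongrightarrow> 0"
proof (rule order_tendstoI)
  show "\<forall>\<^sub>F k in sequentially. a < \<mu> k" if "a < 0" for a
  proof -
    have "a < \<mu> k" for k
      using that \<mu>_nonneg[of k] by linarith
    then show ?thesis
      by (simp add: always_eventually)
  qed
  show "\<forall>\<^sub>F k in sequentially. \<mu> k < a" if "0 < a" for a
  proof -
    obtain k0 where "\<mu> k0 < a"
      using \<mu>_frequently_small[OF \<open>0 < a\<close>] by blast
    moreover have "\<mu> k \<le> \<mu> k0" if "k0 \<le> k" for k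
      using decseq_SucI[of \<mu>, OF \<mu>_Suc_le] \<open>k0 \<le> k\<close> by (simp add: decseq_def)
    ultimately show ?thesis
      by (auto simp: eventually_sequentially intro: le_less_trans)
  qed
qed

definition residual :: "nat \<Rightarrow> 'v \<Rightarrow> 'v"
  where "residual k x = x - (\<Sum>j<k. inner (e j) x *\<^sub>R e j)"

lemma inner_e_sum:
  assumes "i < k"
  shows "inner (e i) (\<Sum>j<k. inner (e j) x *\<^sub>R e j) = inner (e i) x"
proof -
  have "(\<Sum>j<k. inner (e j) x * inner (e i) (e j)) = (\<Sum>j<k. if j = i then inner (e i) x else 0)"
    by (rule sum.cong) (auto simp: inner_e_e)
  then show ?thesis
    using assms by (simp add: inner_sum_right)
qed

lemma residual_in_complement: "residual k x \<in> (e ` {..<k})\<^sup>\<bottom>"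
  by (auto simp: orthogonal_comp_def orthogonal_def residual_def inner_diff_right inner_e_sum)

lemma norm_residual_le: "norm (residual k x) \<le> norm x"
proof -
  have "orthogonal (residual k x) (\<Sum>j<k. inner (e j) x *\<^sub>R e j)"
    using residual_in_complement[of k x]
    by (intro orthogonal_rvsum) (auto simp: orthogonal_comp_def orthogonal_clauses orthogonal_commute)
  then have "(norm x)\<^sup>2 = (norm (residual k x))\<^sup>2 + (norm (\<Sum>j<k. inner (e j) x *\<^sub>R e j))\<^sup>2"
    using norm_add_Pythagorean by (fastforce simp: residual_def)
  then show ?thesis
    by (simp add: power2_le_imp_le)
qed

lemma eigen: "inner (\<gamma> (e k)) (\<gamma> v) = \<mu> k * inner (e k) v"
proof -
  interpret \<gamma>: linear \<gamma> by (fact linear)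
  have "(\<Sum>j<k. inner (e j) v * inner (\<gamma> (e k)) (\<gamma> (e j))) = 0"
    using gamma_e_orthogonal by (intro sum.neutral) (auto simp: orthogonal_def)
  then have "inner (\<gamma> (e k)) (\<gamma> (residual k v)) = inner (\<gamma> (e k)) (\<gamma> v)"
    by (simp add: residual_def \<gamma>.diff \<gamma>.sum \<gamma>.scale inner_diff_right inner_sum_right)
  moreover have "(\<Sum>j<k. inner (e j) v * inner (e k) (e j)) = 0"
    by (intro sum.neutral) (simp add: inner_e_e)
  then have "inner (e k) (residual k v) = inner (e k) v"
    by (simp add: residual_def inner_diff_right inner_sum_right)
  ultimately show ?thesis
    using eigen_on_complement[OF residual_in_complement] by simp
qed

lemma norm_gamma_expansion:
  "(norm (\<gamma> x))\<^sup>2 = (\<Sum>j<k. \<mu> j * (inner (e j) x)\<^sup>2) + (norm (\<gamma> (residual k x)))\<^sup>2"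
proof -
  interpret \<gamma>: linear \<gamma> by (fact linear)
  define c where "c j = inner (e j) x" for j
  have "\<gamma> x = \<gamma> (residual k x) + (\<Sum>j<k. c j *\<^sub>R \<gamma> (e j))"
    by (simp add: residual_def c_def \<gamma>.diff \<gamma>.sum \<gamma>.scale)
  moreover have "orthogonal (\<gamma> (residual k x)) (\<Sum>j<k. c j *\<^sub>R \<gamma> (e j))"
    using residual_in_complement[of k x]
    by (intro orthogonal_rvsum) (auto simp: orthogonal_def orthogonal_comp_def eigen inner_commute)
  moreover have "(norm (\<Sum>j<k. c j *\<^sub>R \<gamma> (e j)))\<^sup>2 = (\<Sum>j<k. (norm (c j *\<^sub>R \<gamma> (e j)))\<^sup>2)"
    using gamma_e_orthogonal
    by (intro norm_sum_Pythagorean) (auto simp: pairwise_def orthogonal_clauses)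
  moreover have "(norm (c j *\<^sub>R \<gamma> (e j)))\<^sup>2 = \<mu> j * (c j)\<^sup>2" for j
    by (simp add: \<mu>_def power_mult_distrib)
  ultimately show ?thesis
    by (simp add: norm_add_Pythagorean c_def add.commute)
qed

lemma norm_gamma_residual_le: "(norm (\<gamma> (residual k x)))\<^sup>2 \<le> \<mu> k * (norm x)\<^sup>2"
proof -
  have "(norm (\<gamma> (residual k x)))\<^sup>2 \<le> \<mu> k * (norm (residual k x))\<^sup>2"
    using maximal[OF residual_in_complement] by (simp add: \<mu>_def)
  also have "\<dots> \<le> \<mu> k * (norm x)\<^sup>2"
    using norm_residual_le \<mu>_nonneg by (intro mult_left_mono power_mono) auto
  finally show ?thesis .
qed

lemma steklov_eigenvalue_inverse_\<mu>:
  assumes "0 < \<mu> k"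
  shows "steklov_eigenvalue \<gamma> (1 / \<mu> k)"
  unfolding steklov_eigenvalue_def
proof (intro exI conjI allI)
  show "e k \<noteq> 0"
    using assms linear_0[OF linear] by (auto simp: \<mu>_def)
  show "inner (e k) v = 1 / \<mu> k * inner (\<gamma> (e k)) (\<gamma> v)" for v
    using assms by (simp add: eigen)
qed

lemma weighted_defect_le:
  assumes "\<forall>v. inner w v = inner u v - lam_star * inner (\<gamma> u) (\<gamma> v)"
  shows "(\<Sum>j<k. \<mu> j * (inner (e j) u)\<^sup>2 * (1 - lam_star * \<mu> j)\<^sup>2) \<le> (norm (\<gamma> w))\<^sup>2"
proof -
  have "inner (e j) w = (1 - lam_star * \<mu> j) * inner (e j) u" for j
    using assms[rule_format, of "e j"] eigen[of j u] by (simp add: inner_commute algebra_simps)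
  then have "(\<Sum>j<k. \<mu> j * (inner (e j) u)\<^sup>2 * (1 - lam_star * \<mu> j)\<^sup>2) = (\<Sum>j<k. \<mu> j * (inner (e j) w)\<^sup>2)"
    by (simp add: power_mult_distrib mult_ac)
  also have "\<dots> \<le> (norm (\<gamma> w))\<^sup>2"
    using norm_gamma_expansion[of w k] by simp
  finally show ?thesis .
qed

lemma exists_eigenvalue_near:
  assumes residual_eq: "\<forall>v. inner w v = inner u v - lam_star * inner (\<gamma> u) (\<gamma> v)"
    and "\<gamma> u \<noteq> 0"
  shows "\<exists>lam. steklov_eigenvalue \<gamma> lam \<and> \<bar>(lam - lam_star) / lam\<bar> \<le> norm (\<gamma> w) / norm (\<gamma> u)"
proof -
  define \<rho> where "\<rho> = norm (\<gamma> w) / norm (\<gamma> u)"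
  have "\<exists>j. 0 < \<mu> j * (inner (e j) u)\<^sup>2 \<and> (1 - lam_star * \<mu> j)\<^sup>2 \<le> \<rho>\<^sup>2"
  proof (rule exists_weighted_term_le)
    show "0 \<le> \<mu> j * (inner (e j) u)\<^sup>2" for j
      using \<mu>_nonneg by simp
    show "0 < (norm (\<gamma> u))\<^sup>2"
      using \<open>\<gamma> u \<noteq> 0\<close> by simp
    show "(\<lambda>k. \<mu> k * (norm u)\<^sup>2) \<longlonglongrightarrow> 0"
      using tendsto_mult_left_zero[OF \<mu>_tendsto_zero] .
    show "(norm (\<gamma> u))\<^sup>2 \<le> (\<Sum>j<k. \<mu> j * (inner (e j) u)\<^sup>2) + \<mu> k * (norm u)\<^sup>2" for k
      using norm_gamma_expansion[of u k] norm_gamma_residual_le[of k u] by linarith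
    show "(\<Sum>j<k. \<mu> j * (inner (e j) u)\<^sup>2 * (1 - lam_star * \<mu> j)\<^sup>2) \<le> \<rho>\<^sup>2 * (norm (\<gamma> u))\<^sup>2" for k
      using weighted_defect_le[OF residual_eq, of k] \<open>\<gamma> u \<noteq> 0\<close> by (simp add: \<rho>_def power_divide)
  qed simp
  then obtain j where j: "0 < \<mu> j * (inner (e j) u)\<^sup>2" "(1 - lam_star * \<mu> j)\<^sup>2 \<le> \<rho>\<^sup>2"
    by blast
  then have "0 < \<mu> j"
    using \<mu>_nonneg[of j] by (auto simp: zero_less_mult_iff)
  then have "(1 / \<mu> j - lam_star) / (1 / \<mu> j) = 1 - lam_star * \<mu> j"
    by (simp add: field_simps)
  then have "\<bar>(1 / \<mu> j - lam_star) / (1 / \<mu> j)\<bar> = \<bar>1 - lam_star * \<mu> j\<bar>"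
    by (rule arg_cong)
  also have "\<dots> \<le> \<rho>"
    using real_sqrt_le_mono[OF j(2)] by (simp add: \<rho>_def)
  finally show ?thesis
    using steklov_eigenvalue_inverse_\<mu>[OF \<open>0 < \<mu> j\<close>] unfolding \<rho>_def by blast
qed

end

lemma Rayleigh_sequence_exists:
  fixes \<gamma> :: "'v::{real_inner,complete_space} \<Rightarrow> 'h::real_inner"
  assumes "compact_operator \<gamma>"
  obtains e where "Rayleigh_sequence \<gamma> e"
proof -
  have "\<exists>u \<in> (set L)\<^sup>\<bottom>. (norm u = 1 \<or> u = 0) \<and>
      (\<forall>v \<in> (set L)\<^sup>\<bottom>. (norm (\<gamma> v))\<^sup>2 \<le> (norm (\<gamma> u))\<^sup>2 * (norm v)\<^sup>2)" for L :: "'v list"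
  proof (cases "\<exists>v \<in> (set L)\<^sup>\<bottom>. \<gamma> v \<noteq> 0")
    case True
    then show ?thesis
      using compact_operator_Rayleigh_maximizer[OF assms closed_orthogonal_comp subspace_orthogonal_comp]
      by blast
  next
    case False
    then show ?thesis
      using subspace_0[OF subspace_orthogonal_comp] by (intro bexI[of _ 0]) auto
  qed
  then obtain pick where pick: "\<And>L. pick L \<in> (set L)\<^sup>\<bottom>" "\<And>L. norm (pick L) = 1 \<or> pick L = 0"
    "\<And>L v. v \<in> (set L)\<^sup>\<bottom> \<Longrightarrow> (norm (\<gamma> v))\<^sup>2 \<le> (norm (\<gamma> (pick L)))\<^sup>2 * (norm v)\<^sup>2"
    by metis
  \<comment> \<open>es k is the list e 0, \<dots>, e (k - 1); each new vector maximises the Rayleigh quotient on its complement.\<close>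
  define es where "es = rec_nat [] (\<lambda>_ L. L @ [pick L])"
  define e where "e k = pick (es k)" for k
  have set_es: "set (es k) = e ` {..<k}" for k
    by (induction k) (auto simp: es_def e_def lessThan_Suc)
  show ?thesis
  proof (rule that, unfold_locales)
    show "compact_operator \<gamma>"
      by fact
    show "orthogonal (e j) (e k)" if "j < k" for j k
      using pick(1)[of "es k"] that by (auto simp: e_def set_es orthogonal_comp_def)
    show "norm (e k) = 1 \<or> e k = 0" for k
      by (simp add: e_def pick(2))
    show "(norm (\<gamma> v))\<^sup>2 \<le> (norm (\<gamma> (e k)))\<^sup>2 * (norm v)\<^sup>2" if "v \<in> (e ` {..<k})\<^sup>\<bottom>" for k v
      using pick(3)[of v "es k"] that by (simp add: e_def set_es)
  qed
qed

theorem theorem3p3: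
  fixes \<gamma> :: "'v::{real_inner, complete_space} \<Rightarrow> 'h::{real_inner, complete_space}"
    and u_star w :: 'v and lam_star :: real
  assumes "compact_operator \<gamma>"
    and "\<forall>v. inner w v = inner u_star v - lam_star * inner (\<gamma> u_star) (\<gamma> v)"
    and "\<gamma> u_star \<noteq> 0"
  shows "\<exists>lam. steklov_eigenvalue \<gamma> lam \<and>
           \<bar>(lam - lam_star) / lam\<bar> \<le> norm (\<gamma> w) / norm (\<gamma> u_star)"
proof -
  obtain e where "Rayleigh_sequence \<gamma> e"
    using Rayleigh_sequence_exists[OF assms(1)] .
  then show ?thesis
    using Rayleigh_sequence.exists_eigenvalue_near assms(2,3) by blast
qed

end
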